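(* Let $n\ge3$ and $k\ge0$ be integers. There exists a subset of $\mathrm{Inc}(A,B)$ that is independent in $G_n^k$ and not reversible if and only if $n\le 2k$.
   Context: For integers $n\ge3$, $k\ge0$, the crown $S_n^k$ is the poset with ground set $A\cup B$, $A=\{a_1,\dots,a_{n+k}\}$, $B=\{b_1,\dots,b_{n+k}\}$, indices cyclic modulo $n+k$; elements of $A$ are pairwise incomparable, as are elements of $B$, and $a_i$ is incomparable to $b_j$ when $j\in\{i,i+1,\dots,i+k\}$ (mod $n+k$), while $a_i<b_j$ otherwise. $\mathrm{Inc}(A,B)$ is the set of pairs $(a,b)\in A\times B$ with $a$ incomparable to $b$. The graph $G_n^k$ has vertex set $\mathrm{Inc}(A,B)$, with $(a,b)$ adjacent to $(x,y)$ iff $a<y$ and $x<b$ in $S_n^k$. A set $R\subseteq\mathrm{Inc}(A,B)$ is reversible if there is a linear extension $L$ of $S_n^k$ with $b<a$ in $L$ for all $(a,b)\in R$. *)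

theory Defs
  imports Main
begin

text \<open>Elements of the crown: CA i stands for a_i, CB j for b_j, indices taken in
  {0..<n+k} (cyclic modulo n+k).\<close>
datatype elem = CA nat | CB nat

definition ground :: "nat \<Rightarrow> nat \<Rightarrow> elem set" where
  "ground n k = {CA i | i. i < n + k} \<union> {CB j | j. j < n + k}"

definition crown_incomp_idx :: "nat \<Rightarrow> nat \<Rightarrow> nat \<Rightarrow> nat \<Rightarrow> bool" where
  "crown_incomp_idx n k i j \<longleftrightarrow> (\<exists>t\<le>k. j = (i + t) mod (n + k))"

definition crown_less :: "nat \<Rightarrow> nat \<Rightarrow> elem \<Rightarrow> elem \<Rightarrow> bool" where
  "crown_less n k x y \<longleftrightarrow>
     (\<exists>i j. x = CA i \<and> y = CB j \<and> i < n + k \<and> j < n + k \<and> \<not> crown_incomp_idx n k i j)"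

definition crown_le :: "nat \<Rightarrow> nat \<Rightarrow> elem rel" where
  "crown_le n k = Id_on (ground n k) \<union> {(x, y). crown_less n k x y}"

definition incomparable :: "nat \<Rightarrow> nat \<Rightarrow> elem \<Rightarrow> elem \<Rightarrow> bool" where
  "incomparable n k x y \<longleftrightarrow> x \<noteq> y \<and> \<not> crown_less n k x y \<and> \<not> crown_less n k y x"

definition Inc :: "nat \<Rightarrow> nat \<Rightarrow> (elem \<times> elem) set" where
  "Inc n k = {(a, b). a \<in> {CA i | i. i < n + k} \<and> b \<in> {CB j | j. j < n + k}
                      \<and> incomparable n k a b}"

definition G_adj :: "nat \<Rightarrow> nat \<Rightarrow> elem \<times> elem \<Rightarrow> elem \<times> elem \<Rightarrow> bool" where
  "G_adj n k p q \<longleftrightarrow> crown_less n k (fst p) (snd q) \<and> crown_less n k (fst q) (snd p)"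

definition independent :: "nat \<Rightarrow> nat \<Rightarrow> (elem \<times> elem) set \<Rightarrow> bool" where
  "independent n k R \<longleftrightarrow> R \<subseteq> Inc n k \<and> (\<forall>p\<in>R. \<forall>q\<in>R. \<not> G_adj n k p q)"

definition linear_extension :: "nat \<Rightarrow> nat \<Rightarrow> elem rel \<Rightarrow> bool" where
  "linear_extension n k L \<longleftrightarrow> linear_order_on (ground n k) L \<and> crown_le n k \<subseteq> L"

definition reversible :: "nat \<Rightarrow> nat \<Rightarrow> (elem \<times> elem) set \<Rightarrow> bool" where
  "reversible n k R \<longleftrightarrow>
     (\<exists>L. linear_extension n k L \<and> (\<forall>(a, b)\<in>R. (b, a) \<in> L \<and> b \<noteq> a))"

end

theory Submission
  imports Defs "HOL-Library.Product_Lexorder"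
begin

text \<open>A set R of incomparable pairs is reversible exactly when it contains no alternating cycle,
  i.e. when the relation b \<rightarrow> b', for (a, b) \<in> R and a < b', is acyclic; a linear extension is
  then obtained by ranking. If n \<le> 2k, three suitably placed pairs form an alternating cycle and
  are nevertheless pairwise non-adjacent in G. If n > 2k, the a's of an independent R lie in a
  window of 2k + 1 consecutive positions; cutting the cycle open there turns the pairs of R into
  an interval order, in which some b of every subset of R is incomparable to all of its a's.
  Hence the relation above is well-founded.\<close>

lemma finite_acyclic_rank:
  fixes r :: "'a rel"
  assumes "finite r" and "acyclic r"
  obtains f :: "'a \<Rightarrow> nat" where "\<And>x y. (x, y) \<in> r \<Longrightarrow> f x < f y"
proof -
  define f where "f x = card {z. (z, x) \<in> r\<^sup>+}" for x
  have "f x < f y" if "(x, y) \<in> r" for x y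
  proof -
    have "{z. (z, y) \<in> r\<^sup>+} \<subseteq> Domain (r\<^sup>+)" by blast
    then have "finite {z. (z, y) \<in> r\<^sup>+}"
      using assms(1) by (meson finite_Domain finite_subset finite_trancl)
    moreover have "{z. (z, x) \<in> r\<^sup>+} \<subset> {z. (z, y) \<in> r\<^sup>+}"
      using that assms(2) by (auto simp: acyclic_def intro: trancl_into_trancl)
    ultimately show ?thesis
      unfolding f_def by (rule psubset_card_mono)
  qed
  then show ?thesis by (rule that)
qed

lemma linear_order_on_rank:
  fixes f :: "'a \<Rightarrow> 'b::linorder"
  assumes "inj_on f A"
  shows "linear_order_on A {(x, y). x \<in> A \<and> y \<in> A \<and> f x \<le> f y}"
  using assms
  unfolding linear_order_on_def partial_order_on_def preorder_on_def
    refl_on_def trans_def antisym_def total_on_def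
  by (auto dest: inj_onD)

lemma mod_eq_if_bounded:
  fixes v M :: int
  assumes "- M < v" and "v < M"
  shows "v mod M = (if 0 \<le> v then v else v + M)"
proof -
  have "(v + M) mod M = v + M" if "v < 0"
    using assms that by (intro mod_pos_pos_trivial) auto
  then show ?thesis
    using assms by (auto simp: mod_pos_pos_trivial)
qed

definition crown_offset :: "nat \<Rightarrow> nat \<Rightarrow> nat \<Rightarrow> nat \<Rightarrow> int" where
  "crown_offset n k i j = (int j - int i) mod int (n + k)"

lemma crown_offset_nonneg: "0 < n \<Longrightarrow> 0 \<le> crown_offset n k i j"
  by (simp add: crown_offset_def)

lemma crown_offset_eq:
  assumes "i < n + k" and "j < n + k"
  shows "crown_offset n k i j = (if i \<le> j then int j - int i else int j - int i + int (n + k))"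
  using assms mod_eq_if_bounded[of "int (n + k)" "int j - int i"]
  by (auto simp: crown_offset_def)

lemma crown_incomp_idx_iff_offset:
  assumes "0 < n" and "j < n + k"
  shows "crown_incomp_idx n k i j \<longleftrightarrow> crown_offset n k i j \<le> int k"
proof
  assume "crown_incomp_idx n k i j"
  then obtain t where t: "t \<le> k" "j = (i + t) mod (n + k)"
    unfolding crown_incomp_idx_def by blast
  have "crown_offset n k i j = ((int i + int t) mod int (n + k) - int i) mod int (n + k)"
    using t by (simp add: crown_offset_def of_nat_mod)
  also have "\<dots> = int t"
    using t assms by (simp add: mod_simps)
  finally show "crown_offset n k i j \<le> int k"
    using t by simp
next
  assume offset: "crown_offset n k i j \<le> int k"
  define t where "t = nat (crown_offset n k i j)"
  have "int ((i + t) mod (n + k)) = (int i + crown_offset n k i j) mod int (n + k)"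
    using assms by (simp add: t_def of_nat_mod crown_offset_nonneg)
  also have "\<dots> = int j"
    using assms by (simp add: crown_offset_def mod_simps)
  finally have "j = (i + t) mod (n + k)"
    by simp
  moreover have "t \<le> k"
    using offset by (simp add: t_def)
  ultimately show "crown_incomp_idx n k i j"
    unfolding crown_incomp_idx_def by blast
qed

lemma crown_less_CA_CB_iff:
  assumes "0 < n"
  shows "crown_less n k (CA i) (CB j) \<longleftrightarrow> i < n + k \<and> j < n + k \<and> int k < crown_offset n k i j"
  using crown_incomp_idx_iff_offset[OF assms] by (auto simp: crown_less_def)

lemma mem_Inc_iff:
  "(a, b) \<in> Inc n k \<longleftrightarrow>
     (\<exists>i j. a = CA i \<and> b = CB j \<and> i < n + k \<and> j < n + k \<and> crown_incomp_idx n k i j)"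
  by (auto simp: Inc_def incomparable_def crown_less_def)

lemma CA_CB_mem_Inc_iff:
  assumes "0 < n"
  shows "(CA i, CB j) \<in> Inc n k \<longleftrightarrow> i < n + k \<and> j < n + k \<and> crown_offset n k i j \<le> int k"
  using crown_incomp_idx_iff_offset[OF assms] by (auto simp: mem_Inc_iff)

lemma finite_ground: "finite (ground n k)"
proof -
  have "ground n k = CA ` {..<n + k} \<union> CB ` {..<n + k}"
    by (auto simp: ground_def)
  then show ?thesis by simp
qed

lemma Inc_subset_ground: "Inc n k \<subseteq> ground n k \<times> ground n k"
  by (auto simp: Inc_def ground_def)

text \<open>The cycles of this relation are the alternating cycles of R:
  pairs (a_1, b_1), ..., (a_m, b_m) in R with a_i < b_(i+1), indices modulo m.\<close>
definition alternating_succ :: "nat \<Rightarrow> nat \<Rightarrow> (elem \<times> elem) set \<Rightarrow> elem rel" where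
  "alternating_succ n k R = {(b, b'). \<exists>a. (a, b) \<in> R \<and> crown_less n k a b'}"

lemma reversible_imp_acyclic_alternating_succ:
  assumes "reversible n k R"
  shows "acyclic (alternating_succ n k R)"
proof -
  obtain L where lin: "linear_order_on (ground n k) L" and ext: "crown_le n k \<subseteq> L"
    and rev: "\<forall>(a, b)\<in>R. (b, a) \<in> L \<and> b \<noteq> a"
    using assms unfolding reversible_def linear_extension_def by blast
  have "trans L" and "antisym L"
    using lin by (auto simp: linear_order_on_def partial_order_on_def preorder_on_def)
  have "(b, b') \<in> L - Id" if succ: "(b, b') \<in> alternating_succ n k R" for b b'
  proof -
    obtain a where "(a, b) \<in> R" and "crown_less n k a b'"
      using succ unfolding alternating_succ_def by blast
    then have "(b, a) \<in> L" "b \<noteq> a" "(a, b') \<in> L"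
      using rev ext by (auto simp: crown_le_def)
    then show ?thesis
      using \<open>trans L\<close> \<open>antisym L\<close> by (auto dest: transD antisymD)
  qed
  then show ?thesis
    using linear_order_on_acyclic[OF lin] by (meson acyclic_subset subrelI)
qed

lemma acyclic_alternating_succ_imp_reversible:
  assumes R: "R \<subseteq> Inc n k" and acyclic: "acyclic (alternating_succ n k R)"
  shows "reversible n k R"
proof -
  have "alternating_succ n k R \<subseteq> ground n k \<times> ground n k"
  proof (rule subrelI)
    fix b b' assume "(b, b') \<in> alternating_succ n k R"
    then obtain a where "(a, b) \<in> R" and "crown_less n k a b'"
      unfolding alternating_succ_def by blast
    moreover from \<open>(a, b) \<in> R\<close> have "b \<in> ground n k"
      using R Inc_subset_ground by blast
    ultimately show "(b, b') \<in> ground n k \<times> ground n k"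
      by (auto simp: crown_less_def ground_def)
  qed
  then have "finite (alternating_succ n k R)"
    using finite_ground by (meson finite_SigmaI finite_subset)
  then obtain \<kappa> :: "elem \<Rightarrow> nat"
    where \<kappa>: "\<And>b b'. (b, b') \<in> alternating_succ n k R \<Longrightarrow> \<kappa> b < \<kappa> b'"
    using acyclic finite_acyclic_rank by blast
  have fin_R: "finite R"
    using R Inc_subset_ground finite_ground by (meson finite_SigmaI finite_subset)
  text \<open>Each a is placed just above the b's it is paired with, each b at its rank; a's come
    before b's on the same level.\<close>
  define \<nu> where "\<nu> a = Max (insert 0 ((\<lambda>b. Suc (\<kappa> b)) ` {b. (a, b) \<in> R}))" for a
  have fin_partners: "finite {b. (a, b) \<in> R}" for a
    using finite_imageI[OF fin_R, of snd] by (rule finite_subset[rotated]) force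
  have \<nu>_above: "\<kappa> b < \<nu> a" if "(a, b) \<in> R" for a b
  proof -
    have "Suc (\<kappa> b) \<le> \<nu> a"
      unfolding \<nu>_def using that fin_partners by (intro Max_ge) auto
    then show ?thesis by simp
  qed
  have \<nu>_below: "\<nu> a \<le> \<kappa> b'" if "crown_less n k a b'" for a b'
  proof -
    have "\<kappa> b < \<kappa> b'" if "(a, b) \<in> R" for b
      using that \<open>crown_less n k a b'\<close> by (intro \<kappa>) (auto simp: alternating_succ_def)
    then show ?thesis
      unfolding \<nu>_def using fin_partners by (subst Max_le_iff) (auto simp: Suc_le_eq)
  qed
  define key :: "elem \<Rightarrow> nat \<times> nat \<times> nat"
    where "key x = (case x of CA i \<Rightarrow> (\<nu> x, 0, i) | CB j \<Rightarrow> (\<kappa> x, 1, j))" for x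
  define L where "L = {(x, y). x \<in> ground n k \<and> y \<in> ground n k \<and> key x \<le> key y}"
  have "inj key"
    unfolding inj_def key_def by (auto split: elem.split)
  then have "linear_order_on (ground n k) L"
    unfolding L_def by (rule linear_order_on_rank[OF inj_on_subset[OF _ subset_UNIV]])
  moreover have "crown_le n k \<subseteq> L"
  proof
    fix p assume "p \<in> crown_le n k"
    then consider "p \<in> Id_on (ground n k)" | a b where "p = (a, b)" "crown_less n k a b"
      unfolding crown_le_def by auto
    then show "p \<in> L"
    proof cases
      case 2
      then obtain i j where "a = CA i" "b = CB j" "CA i \<in> ground n k" "CB j \<in> ground n k"
        by (auto simp: crown_less_def ground_def)
      then show ?thesis
        using 2 \<nu>_below[OF 2(2)] by (auto simp: L_def key_def)
    qed (auto simp: L_def)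
  qed
  moreover have "(b, a) \<in> L \<and> b \<noteq> a" if ab: "(a, b) \<in> R" for a b
  proof -
    have "(a, b) \<in> Inc n k"
      using ab R by blast
    then obtain i j where "a = CA i" "b = CB j" "CA i \<in> ground n k" "CB j \<in> ground n k"
      by (auto simp: mem_Inc_iff ground_def)
    then show ?thesis
      using \<nu>_above[OF ab] by (auto simp: L_def key_def)
  qed
  ultimately show ?thesis
    unfolding reversible_def linear_extension_def by blast
qed

lemma reversible_iff_acyclic_alternating_succ:
  "R \<subseteq> Inc n k \<Longrightarrow> reversible n k R \<longleftrightarrow> acyclic (alternating_succ n k R)"
  using reversible_imp_acyclic_alternating_succ acyclic_alternating_succ_imp_reversible by blast

lemma exists_independent_with_alternating_cycle:
  assumes "2 \<le> n" and "n \<le> 2 * k"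
  shows "\<exists>R. R \<subseteq> Inc n k \<and> independent n k R \<and> \<not> acyclic (alternating_succ n k R)"
proof -
  define x where "x = min k (n - 1)"
  define q where "q = max n (k + 1)"
  define R where "R = {(CA 0, CB 0), (CA n, CB q), (CA x, CB x)}"
  have "0 < n"
    using assms by simp
  have bounds: "1 \<le> x" "x < n" "x \<le> k" "n \<le> q" "k < q" "q < n + k" "q \<le> x + k"
    using assms by (auto simp: x_def q_def)
  note offset = crown_offset_eq CA_CB_mem_Inc_iff[OF \<open>0 < n\<close>] crown_less_CA_CB_iff[OF \<open>0 < n\<close>]
  have "R \<subseteq> Inc n k"
    using bounds by (auto simp: R_def offset)
  moreover have "independent n k R"
    using \<open>R \<subseteq> Inc n k\<close> bounds by (auto simp: independent_def G_adj_def R_def offset)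
  moreover have "\<not> acyclic (alternating_succ n k R)"
  proof -
    have "(CB 0, CB q) \<in> alternating_succ n k R" and "(CB q, CB x) \<in> alternating_succ n k R"
      and "(CB x, CB 0) \<in> alternating_succ n k R"
      using bounds by (auto simp: alternating_succ_def R_def offset)
    then show ?thesis
      unfolding acyclic_def by (meson trancl.trancl_into_trancl r_into_trancl)
  qed
  ultimately show ?thesis
    by blast
qed

text \<open>Position of x on the cycle of indices cut open k steps before i0.\<close>
definition crown_coord :: "nat \<Rightarrow> nat \<Rightarrow> nat \<Rightarrow> nat \<Rightarrow> int" where
  "crown_coord n k i0 x = (int x - int i0 + int k) mod int (n + k)"

lemma crown_coord_bounds:
  "0 < n \<Longrightarrow> 0 \<le> crown_coord n k i0 x" "0 < n \<Longrightarrow> crown_coord n k i0 x < int (n + k)"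
  by (simp_all add: crown_coord_def)

lemma crown_offset_eq_coord:
  "crown_offset n k i x = (crown_coord n k i0 x - crown_coord n k i0 i) mod int (n + k)"
  unfolding crown_offset_def crown_coord_def by (simp add: mod_diff_eq)

context
  fixes n k :: nat and R :: "(elem \<times> elem) set"
  assumes wide: "2 * k < n" and R_Inc: "R \<subseteq> Inc n k" and indep: "independent n k R"
begin

lemma pair_bounds:
  assumes "(CA i, CB j) \<in> R"
  shows "i < n + k" and "j < n + k" and "crown_offset n k i j \<le> int k"
proof -
  have "0 < n"
    using wide by simp
  then show "i < n + k" and "j < n + k" and "crown_offset n k i j \<le> int k"
    using assms R_Inc CA_CB_mem_Inc_iff by blast+
qed

lemma pairs_not_crossing:
  assumes "(CA i, CB j) \<in> R" and "(CA i', CB j') \<in> R"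
  shows "crown_offset n k i j' \<le> int k \<or> crown_offset n k i' j \<le> int k"
  using assms indep pair_bounds[OF assms(1)] pair_bounds[OF assms(2)] wide
  by (force simp: independent_def G_adj_def crown_less_CA_CB_iff)

lemma pair_coord_le:
  assumes "(CA i0, CB j0) \<in> R" and "(CA i, CB j) \<in> R"
  shows "crown_coord n k i0 i \<le> 2 * int k"
proof -
  have "0 < n"
    using wide by simp
  have window: "crown_coord n k i0 i \<le> 2 * int k"
    if "crown_offset n k i0 j' \<le> int k" "crown_offset n k i j' \<le> int k" for j'
  proof -
    let ?u = "crown_offset n k i0 j'" and ?v = "crown_offset n k i j'"
    have "crown_coord n k i0 i = ((int j' - int i0) - (int j' - int i) + int k) mod int (n + k)"
      by (simp add: crown_coord_def)
    also have "\<dots> = (?u - ?v + int k) mod int (n + k)"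
      unfolding crown_offset_def by (metis mod_add_left_eq mod_diff_eq)
    also have "\<dots> = ?u - ?v + int k"
      using that wide crown_offset_nonneg[OF \<open>0 < n\<close>, of k i0 j']
        crown_offset_nonneg[OF \<open>0 < n\<close>, of k i j'] by (intro mod_pos_pos_trivial) auto
    finally show ?thesis
      using that crown_offset_nonneg[OF \<open>0 < n\<close>, of k i j'] by simp
  qed
  from pairs_not_crossing[OF assms] show ?thesis
    using pair_bounds(3)[OF assms(1)] pair_bounds(3)[OF assms(2)] window[of j] window[of j0] by blast
qed

lemma crown_offset_le_iff_coord:
  assumes "(CA i0, CB j0) \<in> R" and "(CA i, CB j) \<in> R"
  shows "crown_offset n k i x \<le> int k \<longleftrightarrow>
    crown_coord n k i0 i \<le> crown_coord n k i0 x \<and> crown_coord n k i0 x \<le> crown_coord n k i0 i + int k"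
proof -
  have "0 < n"
    using wide by simp
  let ?ci = "crown_coord n k i0 i" and ?cx = "crown_coord n k i0 x"
  have bounds: "0 \<le> ?ci" "?ci < int (n + k)" "0 \<le> ?cx" "?cx < int (n + k)"
    using crown_coord_bounds[OF \<open>0 < n\<close>] by blast+
  have "crown_offset n k i x = (if 0 \<le> ?cx - ?ci then ?cx - ?ci else ?cx - ?ci + int (n + k))"
    unfolding crown_offset_eq_coord[of _ _ _ _ i0]
    using bounds by (intro mod_eq_if_bounded) linarith+
  then show ?thesis
    using pair_coord_le[OF assms] bounds wide by (auto split: if_splits)
qed

text \<open>In the coordinates of crown_coord the pairs of S form an interval order; the b of the pair
  whose a is rightmost, or else the b of the pair whose a is leftmost, is incomparable to all
  a's of S.\<close>
lemma exists_b_incomparable_to_all_a: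
  assumes "S \<subseteq> R" and "S \<noteq> {}"
  obtains a' b' where "(a', b') \<in> S" and "\<And>a b. (a, b) \<in> S \<Longrightarrow> \<not> crown_less n k a b'"
proof -
  define P where "P = {(i, j). (CA i, CB j) \<in> S}"
  have P_R: "(CA i, CB j) \<in> R" if "(i, j) \<in> P" for i j
    using that assms(1) by (auto simp: P_def)
  have S_P: "\<exists>i j. a = CA i \<and> b = CB j \<and> (i, j) \<in> P" if "(a, b) \<in> S" for a b
    using that assms(1) R_Inc by (force simp: P_def mem_Inc_iff)
  then obtain i0 j0 where "(i0, j0) \<in> P"
    using assms(2) by fast
  let ?c = "crown_coord n k i0"
  have "P \<noteq> {}"
    using \<open>(i0, j0) \<in> P\<close> by blast
  have "P \<subseteq> {..<n + k} \<times> {..<n + k}"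
    using P_R pair_bounds by fastforce
  then have "finite P"
    by (rule finite_subset) simp
  obtain ia ja where "(ia, ja) \<in> P" and max: "\<And>i j. (i, j) \<in> P \<Longrightarrow> ?c i \<le> ?c ia"
    using ex_is_arg_min_if_finite[OF \<open>finite P\<close> \<open>P \<noteq> {}\<close>, of "\<lambda>p. - ?c (fst p)"]
    by (force simp: is_arg_min_linorder)
  obtain ib jb where "(ib, jb) \<in> P" and min: "\<And>i j. (i, j) \<in> P \<Longrightarrow> ?c ib \<le> ?c i"
    using ex_is_arg_min_if_finite[OF \<open>finite P\<close> \<open>P \<noteq> {}\<close>, of "\<lambda>p. ?c (fst p)"]
    by (force simp: is_arg_min_linorder)
  note coord = crown_offset_le_iff_coord[OF P_R[OF \<open>(i0, j0) \<in> P\<close>] P_R]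
  have no_pred: "\<not> crown_less n k a (CB s)"
    if "?c ia \<le> ?c s" "?c s \<le> ?c ib + int k" "(a, b) \<in> S" for s a b
  proof -
    obtain i j where "a = CA i" "(i, j) \<in> P"
      using S_P[OF \<open>(a, b) \<in> S\<close>] by blast
    moreover have "crown_offset n k i s \<le> int k"
      using coord[OF \<open>(i, j) \<in> P\<close>] that max[OF \<open>(i, j) \<in> P\<close>] min[OF \<open>(i, j) \<in> P\<close>] by simp
    ultimately show ?thesis
      using wide by (simp add: crown_less_CA_CB_iff)
  qed
  show ?thesis
  proof (cases "?c ja \<le> ?c ib + int k")
    case True
    have "?c ia \<le> ?c ja"
      using coord[OF \<open>(ia, ja) \<in> P\<close>] pair_bounds(3)[OF P_R[OF \<open>(ia, ja) \<in> P\<close>]] by blast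
    then show ?thesis
      using that[of "CA ia" "CB ja"] no_pred True \<open>(ia, ja) \<in> P\<close> by (auto simp: P_def)
  next
    case False
    then have "\<not> crown_offset n k ib ja \<le> int k"
      using coord[OF \<open>(ib, jb) \<in> P\<close>] by simp
    then have "crown_offset n k ia jb \<le> int k"
      using pairs_not_crossing[OF P_R[OF \<open>(ib, jb) \<in> P\<close>] P_R[OF \<open>(ia, ja) \<in> P\<close>]] by simp
    then have "?c ia \<le> ?c jb" and "?c jb \<le> ?c ib + int k"
      using coord[OF \<open>(ia, ja) \<in> P\<close>] coord[OF \<open>(ib, jb) \<in> P\<close>]
        pair_bounds(3)[OF P_R[OF \<open>(ib, jb) \<in> P\<close>]] by blast+
    then show ?thesis
      using that[of "CA ib" "CB jb"] no_pred \<open>(ib, jb) \<in> P\<close> by (auto simp: P_def)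
  qed
qed

lemma wf_alternating_succ: "wf (alternating_succ n k R)"
  unfolding wf_eq_minimal
proof (intro allI impI)
  fix Q and b :: elem
  assume "b \<in> Q"
  define S where "S = {(a, b). (a, b) \<in> R \<and> b \<in> Q}"
  show "\<exists>z\<in>Q. \<forall>y. (y, z) \<in> alternating_succ n k R \<longrightarrow> y \<notin> Q"
  proof (cases "S = {}")
    case True
    then show ?thesis
      using \<open>b \<in> Q\<close> by (auto simp: S_def alternating_succ_def)
  next
    case False
    then obtain a' b' where "(a', b') \<in> S" and "\<And>a b. (a, b) \<in> S \<Longrightarrow> \<not> crown_less n k a b'"
      using exists_b_incomparable_to_all_a[of S] by (auto simp: S_def)
    then show ?thesis
      by (auto simp: S_def alternating_succ_def)
  qed
qed

lemma independent_imp_reversible: "reversible n k R"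
  using reversible_iff_acyclic_alternating_succ[OF R_Inc] wf_acyclic[OF wf_alternating_succ]
  by blast

end

theorem lemma1p4:
  fixes n k :: nat
  assumes "n \<ge> 3"
  shows "(\<exists>R. R \<subseteq> Inc n k \<and> independent n k R \<and> \<not> reversible n k R) \<longleftrightarrow> n \<le> 2 * k"
proof
  assume "\<exists>R. R \<subseteq> Inc n k \<and> independent n k R \<and> \<not> reversible n k R"
  then obtain R where "R \<subseteq> Inc n k" "independent n k R" "\<not> reversible n k R"
    by blast
  then show "n \<le> 2 * k"
    using independent_imp_reversible[of k n R] by linarith
next
  assume "n \<le> 2 * k"
  moreover have "2 \<le> n"
    using assms by simp
  ultimately obtain R
    where "R \<subseteq> Inc n k" "independent n k R" "\<not> acyclic (alternating_succ n k R)"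
    using exists_independent_with_alternating_cycle by blast
  then show "\<exists>R. R \<subseteq> Inc n k \<and> independent n k R \<and> \<not> reversible n k R"
    using reversible_iff_acyclic_alternating_succ by blast
qed

end
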